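(* Let $(\Sigma_+,\Sigma_-,N_1,N_2,N_3)$ be a solution of the Wainwright–Hsu system satisfying the constraint, and define for $i=1,2,3$ $$a_i(\tau)=\exp\Big(-\int_0^\tau(3\Sigma_i(s)+1)\,ds\Big),$$ where $\Sigma_1=-\frac23\Sigma_+$, $\Sigma_2=\frac13\Sigma_++\frac1{\sqrt3}\Sigma_-$, $\Sigma_3=\frac13\Sigma_+-\frac1{\sqrt3}\Sigma_-$. (a) If $N_1=0$, $N_2,N_3>0$ and $N_2=N_3$, $\Sigma_-=0$ never hold simultaneously, then $a_i(\tau)\to0$ as $\tau\to\infty$ for $i=1,2,3$. (b) If $N_1<0$ and $N_2,N_3>0$, then $a_2(\tau)\to0$ and $a_3(\tau)\to0$ as $\tau\to\infty$, and $a_1$ is bounded on $[0,\infty)$; in particular all three $a_i$ are bounded as $\tau\to\infty$.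
   Context: Wainwright–Hsu system: for functions $N_1,N_2,N_3,\Sigma_+,\Sigma_-$ of $\tau\in\mathbb{R}$ (prime denotes $d/d\tau$), $N_1'=(q-4\Sigma_+)N_1$, $N_2'=(q+2\Sigma_++2\sqrt3\Sigma_-)N_2$, $N_3'=(q+2\Sigma_+-2\sqrt3\Sigma_-)N_3$, $\Sigma_+'=-(2-q)\Sigma_+-3S_+$, $\Sigma_-'=-(2-q)\Sigma_--3S_-$, where $q=2(\Sigma_+^2+\Sigma_-^2)$, $S_+=\frac12[(N_2-N_3)^2-N_1(2N_1-N_2-N_3)]$, $S_-=\frac{\sqrt3}{2}(N_3-N_2)(N_1-N_2-N_3)$, together with the constraint $\Sigma_+^2+\Sigma_-^2+\frac34[N_1^2+N_2^2+N_3^2-2(N_1N_2+N_2N_3+N_1N_3)]=1$. Solutions with these sign conditions exist for all $\tau\in\mathbb{R}$. (Geometrically, the spacetime metric is $-dt^2+\sum_i a_i^{-2}\xi^i\otimes\xi^i$ with $\xi^i$ a left-invariant coframe and $dt/d\tau=3/\theta$.) *)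

theory Defs
  imports "HOL-Analysis.Analysis"
begin

definition WH_q :: "real \<Rightarrow> real \<Rightarrow> real" where
  "WH_q Sp Sm = 2 * (Sp^2 + Sm^2)"

definition WH_Splus :: "real \<Rightarrow> real \<Rightarrow> real \<Rightarrow> real" where
  "WH_Splus n1 n2 n3 = (1/2) * ((n2 - n3)^2 - n1 * (2*n1 - n2 - n3))"

definition WH_Sminus :: "real \<Rightarrow> real \<Rightarrow> real \<Rightarrow> real" where
  "WH_Sminus n1 n2 n3 = (sqrt 3 / 2) * (n3 - n2) * (n1 - n2 - n3)"

definition WH_solution ::
  "(real \<Rightarrow> real) \<Rightarrow> (real \<Rightarrow> real) \<Rightarrow> (real \<Rightarrow> real) \<Rightarrow> (real \<Rightarrow> real) \<Rightarrow> (real \<Rightarrow> real) \<Rightarrow> bool" where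
  "WH_solution N1 N2 N3 Sp Sm \<longleftrightarrow>
    (\<forall>t. (N1 has_real_derivative ((WH_q (Sp t) (Sm t) - 4 * Sp t) * N1 t)) (at t)
       \<and> (N2 has_real_derivative ((WH_q (Sp t) (Sm t) + 2 * Sp t + 2 * sqrt 3 * Sm t) * N2 t)) (at t)
       \<and> (N3 has_real_derivative ((WH_q (Sp t) (Sm t) + 2 * Sp t - 2 * sqrt 3 * Sm t) * N3 t)) (at t)
       \<and> (Sp has_real_derivative (- (2 - WH_q (Sp t) (Sm t)) * Sp t - 3 * WH_Splus (N1 t) (N2 t) (N3 t))) (at t)
       \<and> (Sm has_real_derivative (- (2 - WH_q (Sp t) (Sm t)) * Sm t - 3 * WH_Sminus (N1 t) (N2 t) (N3 t))) (at t)
       \<and> (Sp t)^2 + (Sm t)^2 + (3/4) * ((N1 t)^2 + (N2 t)^2 + (N3 t)^2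
            - 2 * (N1 t * N2 t + N2 t * N3 t + N1 t * N3 t)) = 1)"

definition Sigma1 :: "(real \<Rightarrow> real) \<Rightarrow> (real \<Rightarrow> real) \<Rightarrow> real \<Rightarrow> real" where
  "Sigma1 Sp Sm s = - (2/3) * Sp s"
definition Sigma2 :: "(real \<Rightarrow> real) \<Rightarrow> (real \<Rightarrow> real) \<Rightarrow> real \<Rightarrow> real" where
  "Sigma2 Sp Sm s = (1/3) * Sp s + (1 / sqrt 3) * Sm s"
definition Sigma3 :: "(real \<Rightarrow> real) \<Rightarrow> (real \<Rightarrow> real) \<Rightarrow> real \<Rightarrow> real" where
  "Sigma3 Sp Sm s = (1/3) * Sp s - (1 / sqrt 3) * Sm s"

text \<open>a_i(tau) = exp(- integral_0^tau (3 Sigma_i(s) + 1) ds); only tau >= 0 is relevant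
  (integral over {0..tau}).\<close>
definition scale_factor :: "(real \<Rightarrow> real) \<Rightarrow> real \<Rightarrow> real" where
  "scale_factor Sig tau = exp (- integral {0..tau} (\<lambda>s. 3 * Sig s + 1))"

end

theory Submission
  imports Defs
begin

(*
  Write g_i = 3 Sigma_i + 1, so that a_i(tau) = exp (- int_0^tau g_i). The equations give
  (ln |N_i|)' = 2 g_i - (2 - q), and the constraint controls both 2 - q >= 0 and the size of the
  N_i. Each claim therefore follows by finding a combination Phi of logarithms such that
  Phi' + c g_i >= 0 pointwise, so that Phi + c int_0^tau g_i is nondecreasing, and bounding Phi
  by means of the constraint.

  For N1 < 0: N1^2 N2 N3 <= 1/9 bounds a1. N2 a2^2 is nonincreasing while
  |N1| N3^2 / (a2^4 e^(3 tau)) is nondecreasing; as |N1| <= 2 and |N2 - N3| <= 2, this forces a2 -> 0.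

  For N1 = 0: Sigma_+ decreases, (ln (1 + Sigma_+))' = -(2 - q), and 1 + Sigma_+ decays at most
  like 1/tau, which again yields a2 -> 0. Once Sigma_+ < 1/2, g1 is bounded below by a positive
  constant, so a1 -> 0. If instead Sigma_+ >= 1/2 forever, then N2 + N3 grows like e^tau, and the
  bounded rotation function (N2 - N3) Sigma_- / (N2 + N3), corrected by - 2 sqrt 3 ln (1 + Sigma_+),
  would grow linearly.

  In both cases a3 follows from a2 by the symmetry (N2, N3, Sigma_-) -> (N3, N2, - Sigma_-).
*)

lemma DERIV_ln_abs_linear:
  assumes f: "(f has_real_derivative k * f t) (at t)" and nz: "f t \<noteq> 0"
  shows "((\<lambda>t. ln \<bar>f t\<bar>) has_real_derivative k) (at t)"
proof -
  have "ln ((f s)\<^sup>2) = 2 * ln \<bar>f s\<bar>" for s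
  proof (cases "f s = 0")
    case False
    then have "ln (\<bar>f s\<bar>\<^sup>2) = 2 * ln \<bar>f s\<bar>" using ln_realpow[of "\<bar>f s\<bar>" 2] by simp
    then show ?thesis by simp
  qed simp
  then have "(\<lambda>t. ln \<bar>f t\<bar>) = (\<lambda>t. ln ((f t)\<^sup>2) / 2)"
    by simp
  moreover have "((\<lambda>t. ln ((f t)\<^sup>2) / 2) has_real_derivative k) (at t)"
    using f nz by (auto intro!: derivative_eq_intros simp: power2_eq_square zero_less_mult_iff linorder_neq_iff)
  ultimately show ?thesis by simp
qed

lemma has_real_derivative_integral_from_0:
  fixes g :: "real \<Rightarrow> real"
  assumes g: "continuous_on UNIV g" and x: "0 < x"
  shows "((\<lambda>T. integral {0..T} g) has_real_derivative g x) (at x)"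
proof -
  have "((\<lambda>T. integral {0..T} g) has_real_derivative g x) (at x within {0..x+1})"
    by (rule integral_has_real_derivative) (use g x in \<open>auto intro: continuous_on_subset\<close>)
  then have "((\<lambda>T. integral {0..T} g) has_real_derivative g x) (at x within {0<..<x+1})"
    by (rule DERIV_subset) auto
  moreover have "at x within {0<..<x+1} = at x"
    by (rule at_within_open) (use x in auto)
  ultimately show ?thesis by simp
qed

lemma DERIV_plus_integral_nondecreasing:
  fixes \<Phi> \<phi> g :: "real \<Rightarrow> real"
  assumes g: "continuous_on UNIV g" and a: "0 \<le> a" "a \<le> T"
    and \<Phi>: "\<And>t. a \<le> t \<Longrightarrow> (\<Phi> has_real_derivative \<phi> t) (at t)"
    and nonneg: "\<And>t. a < t \<Longrightarrow> t < T \<Longrightarrow> 0 \<le> \<phi> t + c * g t"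
  shows "\<Phi> a + c * integral {0..a} g \<le> \<Phi> T + c * integral {0..T} g"
proof (rule DERIV_nonneg_imp_increasing_open[OF a(2)])
  fix t assume t: "a < t" "t < T"
  have "((\<lambda>t. \<Phi> t + c * integral {0..t} g) has_real_derivative \<phi> t + c * g t) (at t)"
    using \<Phi>[of t] has_real_derivative_integral_from_0[OF g, of t] t a
    by (auto intro!: derivative_eq_intros)
  with nonneg[OF t] show "\<exists>y. ((\<lambda>t. \<Phi> t + c * integral {0..t} g) has_real_derivative y) (at t) \<and> 0 \<le> y"
    by blast
next
  have "continuous_on {a..T} \<Phi>"
    by (rule continuous_at_imp_continuous_on) (metis DERIV_isCont atLeastAtMost_iff \<Phi>)
  moreover have "continuous_on {0..T} (\<lambda>t. integral {0..t} g)"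
    by (intro indefinite_integral_continuous_1 integrable_continuous_interval)
      (use g in \<open>auto intro: continuous_on_subset\<close>)
  then have "continuous_on {a..T} (\<lambda>t. integral {0..t} g)"
    by (rule continuous_on_subset) (use a in auto)
  ultimately show "continuous_on {a..T} (\<lambda>t. \<Phi> t + c * integral {0..t} g)"
    by (intro continuous_intros)
qed

lemma DERIV_plus_integral_from_0_nondecreasing:
  fixes \<Phi> \<phi> g :: "real \<Rightarrow> real"
  assumes "continuous_on UNIV g" and "0 \<le> T"
    and "\<And>t. 0 \<le> t \<Longrightarrow> (\<Phi> has_real_derivative \<phi> t) (at t)"
    and "\<And>t. 0 < t \<Longrightarrow> t < T \<Longrightarrow> 0 \<le> \<phi> t + c * g t"
  shows "\<Phi> 0 \<le> \<Phi> T + c * integral {0..T} g"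
  using DERIV_plus_integral_nondecreasing[OF assms(1) order_refl assms(2-4)] by simp

lemma filterlim_at_top_of_mono_bound:
  fixes F :: "real \<Rightarrow> real"
  assumes F: "mono F" and f: "filterlim f at_top at_top"
    and bound: "eventually (\<lambda>x. f x \<le> F (I x)) at_top"
  shows "filterlim I at_top at_top"
  unfolding filterlim_at_top
proof
  fix k :: real
  have "eventually (\<lambda>x. F k < f x) at_top"
    using f by (simp add: filterlim_at_top_dense)
  with bound show "eventually (\<lambda>x. k \<le> I x) at_top"
  proof eventually_elim
    case (elim x)
    show ?case
    proof (rule ccontr)
      assume "\<not> k \<le> I x"
      then have "F (I x) \<le> F k" using F by (simp add: monoD)
      with elim show False by linarith
    qed
  qed
qed

lemma mono_ln_exp_affine:
  fixes a b k :: real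
  assumes "0 \<le> a" and "0 < b" and "0 \<le> k"
  shows "mono (\<lambda>x. ln (a * exp (k * x) + b))"
proof (rule monoI)
  fix x y :: real
  assume "x \<le> y"
  with assms have "a * exp (k * x) + b \<le> a * exp (k * y) + b"
    by (simp add: mult_left_mono)
  moreover have "0 < a * exp (k * x) + b"
    using assms by (simp add: add_nonneg_pos)
  ultimately show "ln (a * exp (k * x) + b) \<le> ln (a * exp (k * y) + b)"
    by (rule ln_mono)
qed

lemma filterlim_affine_at_top:
  fixes a b :: real
  assumes "0 < a"
  shows "filterlim (\<lambda>x. b + a * x) at_top at_top"
  by (intro filterlim_tendsto_add_at_top[OF tendsto_const]
      filterlim_tendsto_pos_mult_at_top[OF tendsto_const assms filterlim_ident])

lemma scale_factor_tendsto_0: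
  assumes "filterlim (\<lambda>T. integral {0..T} (\<lambda>s. 3 * Sig s + 1)) at_top at_top"
  shows "(scale_factor Sig \<longlongrightarrow> 0) at_top"
  unfolding scale_factor_def
  by (rule filterlim_compose[OF exp_at_bot]) (use assms in \<open>simp add: filterlim_uminus_at_top\<close>)

lemma scale_factor_bounded:
  assumes "\<And>T. 0 \<le> T \<Longrightarrow> c \<le> integral {0..T} (\<lambda>s. 3 * Sig s + 1)"
  shows "\<exists>C. \<forall>t\<ge>0. \<bar>scale_factor Sig t\<bar> \<le> C"
  using assms by (intro exI[of _ "exp (- c)"]) (auto simp: scale_factor_def)

lemma Sigma3_eq_Sigma2_swap: "Sigma3 Sp Sm = Sigma2 Sp (\<lambda>t. - Sm t)"
  by (simp add: fun_eq_iff Sigma2_def Sigma3_def)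

lemma two_minus_WH_q_le: "2 - WH_q x y \<le> 4 * (1 + x)"
proof -
  have "4 * (1 + x) - (2 - WH_q x y) = 2 * (1 + x)\<^sup>2 + 2 * y\<^sup>2"
    by (simp add: WH_q_def power2_eq_square algebra_simps)
  moreover have "0 \<le> 2 * (1 + x)\<^sup>2 + 2 * y\<^sup>2"
    by simp
  ultimately show ?thesis
    by linarith
qed

lemma rotation_error_bound:
  fixes D S Sm p :: real
  assumes S: "0 < S" "\<bar>D\<bar> \<le> S" and D: "\<bar>D\<bar> \<le> 2" and Sm: "\<bar>Sm\<bar> \<le> 1" and p: "0 \<le> p" "p \<le> 2"
  shows "p * D * Sm / S + 2 * sqrt 3 * Sm\<^sup>2 * D\<^sup>2 / S\<^sup>2 \<le> 12 / S"
proof -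
  have "\<bar>p * D * Sm\<bar> \<le> 2 * 2 * 1"
    unfolding abs_mult using p D Sm by (intro mult_mono) simp_all
  then have first: "p * D * Sm / S \<le> 4 / S"
    using S by (intro divide_right_mono) auto
  have "D\<^sup>2 = \<bar>D\<bar> * \<bar>D\<bar>"
    by (simp add: power2_eq_square)
  also have "\<dots> \<le> 2 * S"
    using S D by (intro mult_mono) auto
  finally have "Sm\<^sup>2 * D\<^sup>2 \<le> 1 * (2 * S)"
    using Sm by (intro mult_mono) (simp_all add: abs_square_le_1)
  moreover have "2 * sqrt 3 \<le> (4::real)"
    using real_sqrt_le_mono[of 3 4] by (simp add: real_sqrt_four)
  ultimately have "(2 * sqrt 3) * (Sm\<^sup>2 * D\<^sup>2) \<le> 4 * (2 * S)"
    using S mult_mono[of "2 * sqrt 3" 4 "Sm\<^sup>2 * D\<^sup>2" "2 * S"] by simp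
  then have "2 * sqrt 3 * Sm\<^sup>2 * D\<^sup>2 / S\<^sup>2 \<le> 8 / S"
    using S by (simp add: pos_divide_le_eq power2_eq_square mult.assoc)
  with first show ?thesis
    by simp
qed

locale WH_orbit =
  fixes N1 N2 N3 Sp Sm :: "real \<Rightarrow> real"
  assumes sol: "WH_solution N1 N2 N3 Sp Sm"
begin

lemma DERIV_N1: "(N1 has_real_derivative (WH_q (Sp t) (Sm t) - 4 * Sp t) * N1 t) (at t)"
  and DERIV_N2: "(N2 has_real_derivative (WH_q (Sp t) (Sm t) + 2 * Sp t + 2 * sqrt 3 * Sm t) * N2 t) (at t)"
  and DERIV_N3: "(N3 has_real_derivative (WH_q (Sp t) (Sm t) + 2 * Sp t - 2 * sqrt 3 * Sm t) * N3 t) (at t)"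
  and DERIV_Sp: "(Sp has_real_derivative
        - (2 - WH_q (Sp t) (Sm t)) * Sp t - 3 * WH_Splus (N1 t) (N2 t) (N3 t)) (at t)"
  and DERIV_Sm: "(Sm has_real_derivative
        - (2 - WH_q (Sp t) (Sm t)) * Sm t - 3 * WH_Sminus (N1 t) (N2 t) (N3 t)) (at t)"
  and constraint: "(Sp t)\<^sup>2 + (Sm t)\<^sup>2 + 3/4 * ((N1 t)\<^sup>2 + (N2 t)\<^sup>2 + (N3 t)\<^sup>2
        - 2 * (N1 t * N2 t + N2 t * N3 t + N1 t * N3 t)) = 1"
  using sol unfolding WH_solution_def by blast+

lemma WH_solution_swap: "WH_solution N1 N3 N2 Sp (\<lambda>t. - Sm t)"
proof -
  have q: "WH_q a (- b) = WH_q a b" for a b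
    by (simp add: WH_q_def)
  have Splus: "WH_Splus n1 n3 n2 = WH_Splus n1 n2 n3" for n1 n2 n3
    by (simp add: WH_Splus_def power2_commute algebra_simps)
  have Sminus: "WH_Sminus n1 n3 n2 = - WH_Sminus n1 n2 n3" for n1 n2 n3
  proof -
    have "(n2 - n3) * (n1 - n3 - n2) = - ((n3 - n2) * (n1 - n2 - n3))"
      by (simp add: algebra_simps)
    then show ?thesis
      unfolding WH_Sminus_def mult.assoc by simp
  qed
  have "((\<lambda>t. - Sm t) has_real_derivative
      - (2 - WH_q (Sp t) (- Sm t)) * - Sm t - 3 * WH_Sminus (N1 t) (N3 t) (N2 t)) (at t)" for t
    using DERIV_minus[OF DERIV_Sm[of t]] by (simp add: q Sminus[of "N1 t" "N2 t" "N3 t"])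
  then show ?thesis
    unfolding WH_solution_def using DERIV_N1 DERIV_N2 DERIV_N3 DERIV_Sp constraint
    by (simp add: q Splus ac_simps)
qed

lemma continuous_on_Sp: "continuous_on UNIV Sp"
  and continuous_on_Sm: "continuous_on UNIV Sm"
  by (auto intro!: continuous_at_imp_continuous_on DERIV_isCont[OF DERIV_Sp] DERIV_isCont[OF DERIV_Sm])

definition "g1 = (\<lambda>s. 3 * Sigma1 Sp Sm s + 1)"
definition "g2 = (\<lambda>s. 3 * Sigma2 Sp Sm s + 1)"
definition "g3 = (\<lambda>s. 3 * Sigma3 Sp Sm s + 1)"

lemma g1_eq: "g1 s = 1 - 2 * Sp s"
  and g2_eq: "g2 s = 1 + Sp s + sqrt 3 * Sm s"
  and g3_eq: "g3 s = 1 + Sp s - sqrt 3 * Sm s"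
proof -
  have "x * 3 / sqrt 3 = x * sqrt 3" for x :: real
    by (metis real_div_sqrt times_divide_eq_right zero_le_numeral)
  then show "g1 s = 1 - 2 * Sp s" "g2 s = 1 + Sp s + sqrt 3 * Sm s" "g3 s = 1 + Sp s - sqrt 3 * Sm s"
    by (simp_all add: g1_def g2_def g3_def Sigma1_def Sigma2_def Sigma3_def algebra_simps)
qed

lemma continuous_on_g1: "continuous_on UNIV g1"
  and continuous_on_g2: "continuous_on UNIV g2"
  unfolding g1_eq[abs_def] g2_eq[abs_def]
  by (intro continuous_intros continuous_on_Sp continuous_on_Sm)+

lemma DERIV_ln_N1: "N1 t \<noteq> 0 \<Longrightarrow>
    ((\<lambda>t. ln \<bar>N1 t\<bar>) has_real_derivative 2 * g1 t - (2 - WH_q (Sp t) (Sm t))) (at t)"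
  and DERIV_ln_N2: "N2 t \<noteq> 0 \<Longrightarrow>
    ((\<lambda>t. ln \<bar>N2 t\<bar>) has_real_derivative 2 * g2 t - (2 - WH_q (Sp t) (Sm t))) (at t)"
  and DERIV_ln_N3: "N3 t \<noteq> 0 \<Longrightarrow>
    ((\<lambda>t. ln \<bar>N3 t\<bar>) has_real_derivative 2 * g3 t - (2 - WH_q (Sp t) (Sm t))) (at t)"
  by (rule DERIV_ln_abs_linear, rule DERIV_N1[THEN DERIV_cong] DERIV_N2[THEN DERIV_cong]
      DERIV_N3[THEN DERIV_cong], simp add: g1_eq g2_eq g3_eq algebra_simps, assumption)+

section \<open>Bianchi type VIII\<close>

context
  assumes N1_neg: "\<And>t. N1 t < 0" and N2_pos: "\<And>t. 0 < N2 t" and N3_pos: "\<And>t. 0 < N3 t"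
begin

lemma VIII_constraint_bounds:
  shows "(Sp t)\<^sup>2 + (Sm t)\<^sup>2 \<le> 1" and "\<bar>N1 t\<bar> \<le> 2" and "\<bar>N2 t - N3 t\<bar> \<le> 2"
    and "- N1 t * (N2 t + N3 t) \<le> 2/3"
proof -
  have eq: "4 * (Sp t)\<^sup>2 + 4 * (Sm t)\<^sup>2 + 3 * (N1 t)\<^sup>2 + 3 * (N2 t - N3 t)\<^sup>2
      + 6 * (- N1 t * (N2 t + N3 t)) = 4"
    using constraint[of t] by (simp add: power2_eq_square algebra_simps)
  have "0 \<le> - N1 t * (N2 t + N3 t)"
    using N1_neg[of t] N2_pos[of t] N3_pos[of t] by (intro mult_nonneg_nonneg) auto
  moreover have "0 \<le> (Sp t)\<^sup>2" "0 \<le> (Sm t)\<^sup>2" "0 \<le> (N1 t)\<^sup>2" "0 \<le> (N2 t - N3 t)\<^sup>2"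
    by simp_all
  ultimately have "(Sp t)\<^sup>2 + (Sm t)\<^sup>2 \<le> 1" "(N1 t)\<^sup>2 \<le> 4" "(N2 t - N3 t)\<^sup>2 \<le> 4"
    "- N1 t * (N2 t + N3 t) \<le> 2/3"
    using eq by linarith+
  then show "(Sp t)\<^sup>2 + (Sm t)\<^sup>2 \<le> 1" "\<bar>N1 t\<bar> \<le> 2" "\<bar>N2 t - N3 t\<bar> \<le> 2"
    "- N1 t * (N2 t + N3 t) \<le> 2/3"
    using power2_le_iff_abs_le[of 2 "N1 t"] power2_le_iff_abs_le[of 2 "N2 t - N3 t"] by simp_all
qed

lemma VIII_product_bound: "(N1 t)\<^sup>2 * N2 t * N3 t \<le> 1/9"
proof -
  have "(- N1 t * (N2 t + N3 t))\<^sup>2 = 4 * ((N1 t)\<^sup>2 * N2 t * N3 t) + (N1 t * (N2 t - N3 t))\<^sup>2"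
    by (simp add: power2_eq_square algebra_simps)
  then have "4 * ((N1 t)\<^sup>2 * N2 t * N3 t) \<le> (- N1 t * (N2 t + N3 t))\<^sup>2"
    by simp
  also have "\<dots> \<le> (2/3)\<^sup>2"
    using N1_neg[of t] N2_pos[of t] N3_pos[of t]
    by (intro power_mono VIII_constraint_bounds(4) mult_nonneg_nonneg) auto
  finally show ?thesis
    by (simp add: power_divide mult_ac)
qed

lemma VIII_scale_factor1_bounded: "\<exists>C. \<forall>t\<ge>0. \<bar>scale_factor (Sigma1 Sp Sm) t\<bar> \<le> C"
proof -
  define \<Phi> where "\<Phi> t = 2 * ln \<bar>N1 t\<bar> + ln \<bar>N2 t\<bar> + ln \<bar>N3 t\<bar>" for t
  have \<Phi>_le: "\<Phi> t \<le> ln (1/9)" for t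
  proof -
    have "\<Phi> t = ln ((N1 t)\<^sup>2 * N2 t * N3 t)"
      using N1_neg[of t] N2_pos[of t] N3_pos[of t] ln_realpow[of "\<bar>N1 t\<bar>" 2]
      by (simp add: \<Phi>_def ln_mult)
    also have "\<dots> \<le> ln (1/9)"
      using VIII_product_bound[of t] N1_neg[of t] N2_pos[of t] N3_pos[of t] by simp
    finally show ?thesis .
  qed
  have increasing: "\<Phi> 0 \<le> \<Phi> T + 2 * integral {0..T} g1" if "0 \<le> T" for T
  proof (rule DERIV_plus_integral_from_0_nondecreasing[OF continuous_on_g1 that])
    show "(\<Phi> has_real_derivative 2 * (2 * g1 t - (2 - WH_q (Sp t) (Sm t)))
        + (2 * g2 t - (2 - WH_q (Sp t) (Sm t))) + (2 * g3 t - (2 - WH_q (Sp t) (Sm t)))) (at t)" for t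
      unfolding \<Phi>_def[abs_def] using N1_neg[of t] N2_pos[of t] N3_pos[of t]
      by (intro DERIV_add DERIV_cmult DERIV_ln_N1 DERIV_ln_N2 DERIV_ln_N3) auto
    have "0 \<le> 2 * (1 - 2 * Sp t)\<^sup>2 + 8 * (Sm t)\<^sup>2" for t
      by simp
    then show "0 \<le> 2 * (2 * g1 t - (2 - WH_q (Sp t) (Sm t)))
        + (2 * g2 t - (2 - WH_q (Sp t) (Sm t))) + (2 * g3 t - (2 - WH_q (Sp t) (Sm t))) + 2 * g1 t" for t
      by (simp add: g1_eq g2_eq g3_eq WH_q_def power2_eq_square algebra_simps)
  qed
  have "(\<Phi> 0 - ln (1/9)) / 2 \<le> integral {0..T} g1" if "0 \<le> T" for T
    using increasing[OF that] \<Phi>_le[of T] by (simp add: field_simps)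
  then show ?thesis
    by (rule scale_factor_bounded[of "(\<Phi> 0 - ln (1/9)) / 2" "Sigma1 Sp Sm", folded g1_def])
qed

lemma VIII_N2_le:
  assumes "0 \<le> T"
  shows "N2 T \<le> N2 0 * exp (2 * integral {0..T} g2)"
proof -
  have "- ln \<bar>N2 0\<bar> \<le> - ln \<bar>N2 T\<bar> + 2 * integral {0..T} g2"
  proof (rule DERIV_plus_integral_from_0_nondecreasing[OF continuous_on_g2 assms])
    show "((\<lambda>t. - ln \<bar>N2 t\<bar>) has_real_derivative - (2 * g2 t - (2 - WH_q (Sp t) (Sm t)))) (at t)" for t
      using N2_pos[of t] by (intro DERIV_minus DERIV_ln_N2) simp
    show "0 \<le> - (2 * g2 t - (2 - WH_q (Sp t) (Sm t))) + 2 * g2 t" for t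
      using VIII_constraint_bounds(1)[of t] by (simp add: WH_q_def)
  qed
  then have "ln (N2 T) \<le> ln (N2 0) + 2 * integral {0..T} g2"
    using N2_pos[of 0] N2_pos[of T] by simp
  then have "exp (ln (N2 T)) \<le> exp (ln (N2 0) + 2 * integral {0..T} g2)"
    by simp
  then show ?thesis
    using N2_pos[of 0] N2_pos[of T] by (simp add: exp_add)
qed

lemma VIII_N1_N3_growth:
  assumes "0 \<le> T"
  shows "ln \<bar>N1 0\<bar> + 2 * ln \<bar>N3 0\<bar> + 3 * T \<le> ln \<bar>N1 T\<bar> + 2 * ln \<bar>N3 T\<bar> + 4 * integral {0..T} g2"
proof -
  define \<Phi> where "\<Phi> t = ln \<bar>N1 t\<bar> + 2 * ln \<bar>N3 t\<bar> - 3 * t" for t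
  have "\<Phi> 0 \<le> \<Phi> T + 4 * integral {0..T} g2"
  proof (rule DERIV_plus_integral_from_0_nondecreasing[OF continuous_on_g2 assms])
    show "(\<Phi> has_real_derivative (2 * g1 t - (2 - WH_q (Sp t) (Sm t)))
        + 2 * (2 * g3 t - (2 - WH_q (Sp t) (Sm t))) - 3 * 1) (at t)" for t
      unfolding \<Phi>_def[abs_def] using N1_neg[of t] N3_pos[of t]
      by (intro DERIV_add DERIV_diff DERIV_cmult DERIV_ln_N1 DERIV_ln_N3 DERIV_ident) auto
    have "0 \<le> 6 * (Sp t + 1/3)\<^sup>2 + 6 * (Sm t)\<^sup>2 + 1/3" for t
      by simp
    then show "0 \<le> (2 * g1 t - (2 - WH_q (Sp t) (Sm t)))
        + 2 * (2 * g3 t - (2 - WH_q (Sp t) (Sm t))) - 3 * 1 + 4 * g2 t" for t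
      by (simp add: g1_eq g2_eq g3_eq WH_q_def power2_eq_square algebra_simps)
  qed
  then show ?thesis
    by (simp add: \<Phi>_def)
qed

lemma VIII_scale_factor2_tendsto_0: "(scale_factor (Sigma2 Sp Sm) \<longlongrightarrow> 0) at_top"
proof -
  define I where "I T = integral {0..T} g2" for T
  define F where "F x = ln 2 + 2 * ln (N2 0 * exp (2 * x) + 2) + 4 * x" for x
  define c where "c = ln \<bar>N1 0\<bar> + 2 * ln \<bar>N3 0\<bar>"
  have "c + 3 * T \<le> F (I T)" if "0 \<le> T" for T
  proof -
    have "ln \<bar>N1 T\<bar> \<le> ln 2"
      using N1_neg[of T] VIII_constraint_bounds(2)[of T] by simp
    moreover have "N3 T \<le> N2 0 * exp (2 * I T) + 2"
      using VIII_N2_le[OF that] VIII_constraint_bounds(3)[of T] by (simp add: I_def)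
    then have "ln \<bar>N3 T\<bar> \<le> ln (N2 0 * exp (2 * I T) + 2)"
      using N3_pos[of T] by simp
    ultimately show ?thesis
      using VIII_N1_N3_growth[OF that] by (simp add: F_def I_def c_def)
  qed
  then have "eventually (\<lambda>T. c + 3 * T \<le> F (I T)) at_top"
    by (rule eventually_at_top_linorderI)
  moreover have "mono F"
  proof (rule monoI)
    fix x y :: real
    assume "x \<le> y"
    with monoD[OF mono_ln_exp_affine[of "N2 0" 2 2] this] N2_pos[of 0]
    show "F x \<le> F y"
      by (simp add: F_def)
  qed
  ultimately have "filterlim I at_top at_top"
    using filterlim_at_top_of_mono_bound filterlim_affine_at_top[of 3 c] by simp
  then show ?thesis
    unfolding I_def by (rule scale_factor_tendsto_0[of "Sigma2 Sp Sm", folded g2_def])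
qed

end

section \<open>Bianchi type VII_0\<close>

definition "rotation t = (N2 t - N3 t) * Sm t / (N2 t + N3 t)"

(* N2 = N3 and Sm = 0 define the invariant set of locally rotationally symmetric solutions. *)
context
  assumes N1_zero: "\<And>t. N1 t = 0" and N2_pos: "\<And>t. 0 < N2 t" and N3_pos: "\<And>t. 0 < N3 t"
    and not_LRS: "\<And>t. \<not> (N2 t = N3 t \<and> Sm t = 0)"
begin

lemma VII0_constraint: "(Sp t)\<^sup>2 + (Sm t)\<^sup>2 + 3/4 * (N2 t - N3 t)\<^sup>2 = 1"
  using constraint[of t] by (simp add: N1_zero power2_eq_square algebra_simps)

lemma VII0_constraint_bounds: "\<bar>Sm t\<bar> \<le> 1" "\<bar>N2 t - N3 t\<bar> \<le> 2"
proof -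
  have "(Sm t)\<^sup>2 \<le> 1" "(N2 t - N3 t)\<^sup>2 \<le> 4"
    using VII0_constraint[of t] zero_le_power2[of "Sp t"] zero_le_power2[of "Sm t"]
      zero_le_power2[of "N2 t - N3 t"] by linarith+
  then show "\<bar>Sm t\<bar> \<le> 1" "\<bar>N2 t - N3 t\<bar> \<le> 2"
    by (simp_all add: abs_square_le_1 power2_le_imp_le[of "\<bar>N2 t - N3 t\<bar>" 2])
qed

lemma VII0_two_minus_q: "2 - WH_q (Sp t) (Sm t) = 3/2 * (N2 t - N3 t)\<^sup>2"
  using VII0_constraint[of t] by (simp add: WH_q_def algebra_simps)

lemma VII0_abs_Sp_less_1: "\<bar>Sp t\<bar> < 1"
proof -
  have "(Sp t)\<^sup>2 < 1"
  proof (rule ccontr)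
    assume "\<not> (Sp t)\<^sup>2 < 1"
    moreover have "0 \<le> (Sm t)\<^sup>2" "0 \<le> (N2 t - N3 t)\<^sup>2"
      by simp_all
    ultimately have "(Sm t)\<^sup>2 = 0" "(N2 t - N3 t)\<^sup>2 = 0"
      using VII0_constraint[of t] by linarith+
    with not_LRS[of t] show False
      by simp
  qed
  then show ?thesis
    by (simp add: abs_square_less_1)
qed

lemma VII0_DERIV_Sp: "(Sp has_real_derivative - (2 - WH_q (Sp t) (Sm t)) * (1 + Sp t)) (at t)"
proof (rule DERIV_Sp[THEN DERIV_cong])
  have "3 * WH_Splus (N1 t) (N2 t) (N3 t) = 2 - WH_q (Sp t) (Sm t)"
    by (simp add: WH_Splus_def N1_zero VII0_two_minus_q)
  then show "- (2 - WH_q (Sp t) (Sm t)) * Sp t - 3 * WH_Splus (N1 t) (N2 t) (N3 t)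
      = - (2 - WH_q (Sp t) (Sm t)) * (1 + Sp t)"
    by (simp add: algebra_simps)
qed

lemma VII0_Sp_gt_minus_1: "0 < 1 + Sp t"
  using VII0_abs_Sp_less_1[of t] by linarith

lemma VII0_DERIV_ln_1_plus_Sp:
  "((\<lambda>t. ln (1 + Sp t)) has_real_derivative - (2 - WH_q (Sp t) (Sm t))) (at t)"
proof -
  have "((\<lambda>t. 1 + Sp t) has_real_derivative - (2 - WH_q (Sp t) (Sm t)) * (1 + Sp t)) (at t)"
    using DERIV_add[OF DERIV_const VII0_DERIV_Sp] by simp
  from DERIV_ln_abs_linear[OF this] VII0_Sp_gt_minus_1[of t]
  have "((\<lambda>t. ln \<bar>1 + Sp t\<bar>) has_real_derivative - (2 - WH_q (Sp t) (Sm t))) (at t)"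
    by simp
  moreover have "(\<lambda>t. ln \<bar>1 + Sp t\<bar>) = (\<lambda>t. ln (1 + Sp t))"
    using VII0_Sp_gt_minus_1 by (simp add: abs_of_pos)
  ultimately show ?thesis
    by simp
qed

lemma VII0_Sp_antimono:
  assumes "s \<le> t"
  shows "Sp t \<le> Sp s"
proof (rule DERIV_nonpos_imp_nonincreasing[OF assms])
  fix x
  show "\<exists>y. (Sp has_real_derivative y) (at x) \<and> y \<le> 0"
  proof (intro exI conjI)
    show "(Sp has_real_derivative - (2 - WH_q (Sp x) (Sm x)) * (1 + Sp x)) (at x)"
      by (rule VII0_DERIV_Sp)
    have "0 \<le> 2 - WH_q (Sp x) (Sm x)"
      using VII0_two_minus_q[of x] zero_le_power2[of "N2 x - N3 x"] by linarith
    with VII0_Sp_gt_minus_1[of x] show "- (2 - WH_q (Sp x) (Sm x)) * (1 + Sp x) \<le> 0"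
      by (intro mult_nonpos_nonneg) simp_all
  qed
qed

lemma VII0_1_plus_Sp_lower_bound:
  assumes "0 \<le> T"
  shows "(1 + Sp 0) / (1 + 4 * (1 + Sp 0) * T) \<le> 1 + Sp T"
proof -
  note pos = VII0_Sp_gt_minus_1
  have "4 * 0 - inverse (1 + Sp 0) \<le> 4 * T - inverse (1 + Sp T)"
  proof (rule DERIV_nonneg_imp_nondecreasing[OF assms])
    fix t
    have DERIV_w: "((\<lambda>t. 1 + Sp t) has_real_derivative - (2 - WH_q (Sp t) (Sm t)) * (1 + Sp t)) (at t)"
      using DERIV_add[OF DERIV_const VII0_DERIV_Sp] by simp
    have "4 * 1 - - (- p * w * inverse (w ^ Suc (Suc 0))) = 4 - p / w" if "0 < w" for p w :: real
      using that by (simp add: field_simps)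
    from DERIV_cong[OF DERIV_diff[OF DERIV_cmult[OF DERIV_ident] DERIV_inverse_fun[OF DERIV_w]] this[OF pos[of t]]]
    have "((\<lambda>t. 4 * t - inverse (1 + Sp t)) has_real_derivative
        4 - (2 - WH_q (Sp t) (Sm t)) / (1 + Sp t)) (at t)"
      using pos[of t] by simp
    moreover have "(2 - WH_q (Sp t) (Sm t)) / (1 + Sp t) \<le> 4"
      using two_minus_WH_q_le[of "Sp t" "Sm t"] pos[of t] by (simp add: divide_le_eq)
    ultimately show "\<exists>y. ((\<lambda>t. 4 * t - inverse (1 + Sp t)) has_real_derivative y) (at t) \<and> 0 \<le> y"
      by force
  qed
  then have "1 + Sp 0 \<le> (1 + Sp T) * (1 + 4 * (1 + Sp 0) * T)"
    using pos[of 0] pos[of T] by (simp add: field_simps)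
  moreover have "0 < 1 + 4 * (1 + Sp 0) * T"
    using pos[of 0] assms by (simp add: add_pos_nonneg)
  ultimately show ?thesis
    by (simp add: divide_le_eq)
qed

lemma VII0_N2_le:
  assumes "0 \<le> T"
  shows "N2 T \<le> N2 0 / (1 + Sp 0) * (1 + Sp T) * exp (2 * integral {0..T} g2)"
proof -
  have "ln (1 + Sp 0) - ln \<bar>N2 0\<bar> \<le> ln (1 + Sp T) - ln \<bar>N2 T\<bar> + 2 * integral {0..T} g2"
  proof (rule DERIV_plus_integral_from_0_nondecreasing[OF continuous_on_g2 assms])
    show "((\<lambda>t. ln (1 + Sp t) - ln \<bar>N2 t\<bar>) has_real_derivative
        - (2 - WH_q (Sp t) (Sm t)) - (2 * g2 t - (2 - WH_q (Sp t) (Sm t)))) (at t)" for t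
      using N2_pos[of t] by (intro DERIV_diff VII0_DERIV_ln_1_plus_Sp DERIV_ln_N2) simp
  qed simp
  then have "ln (N2 T) \<le> ln (N2 0) - ln (1 + Sp 0) + ln (1 + Sp T) + 2 * integral {0..T} g2"
    using N2_pos[of 0] N2_pos[of T] by simp
  then have "exp (ln (N2 T)) \<le> exp (ln (N2 0) - ln (1 + Sp 0) + ln (1 + Sp T) + 2 * integral {0..T} g2)"
    by simp
  then show ?thesis
    using N2_pos[of 0] N2_pos[of T] VII0_Sp_gt_minus_1[of 0] VII0_Sp_gt_minus_1[of T]
    by (simp add: exp_add exp_diff)
qed

lemma VII0_N3_sq_le:
  assumes "0 \<le> T"
  shows "(N3 T)\<^sup>2 \<le> (4 * (N2 0 / (1 + Sp 0))\<^sup>2 * exp (4 * integral {0..T} g2) + 16/3) * (1 + Sp T)"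
proof -
  define A where "A = N2 0 / (1 + Sp 0)"
  define w where "w = 1 + Sp T"
  define E where "E = exp (2 * integral {0..T} g2)"
  have "0 < w" "w \<le> 2"
    using VII0_Sp_gt_minus_1[of T] VII0_abs_Sp_less_1[of T] by (auto simp: w_def)
  have "(N2 T)\<^sup>2 \<le> (A * w * E)\<^sup>2"
    using N2_pos[of T] VII0_N2_le[OF assms] by (intro power_mono) (auto simp: A_def w_def E_def)
  also have "\<dots> = A\<^sup>2 * E\<^sup>2 * w * w"
    by (simp add: power2_eq_square)
  also have "\<dots> \<le> A\<^sup>2 * E\<^sup>2 * w * 2"
    using \<open>0 < w\<close> \<open>w \<le> 2\<close> by (intro mult_left_mono) auto
  finally have N2_sq: "(N2 T)\<^sup>2 \<le> 2 * A\<^sup>2 * E\<^sup>2 * w"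
    by simp
  have D_sq: "(N2 T - N3 T)\<^sup>2 \<le> 8/3 * w"
    using two_minus_WH_q_le[of "Sp T" "Sm T"] VII0_two_minus_q[of T] by (simp add: w_def)
  have "(N3 T)\<^sup>2 \<le> 2 * (N2 T)\<^sup>2 + 2 * (N2 T - N3 T)\<^sup>2"
    using zero_le_power2[of "N3 T - 2 * N2 T"] by (simp add: power2_eq_square algebra_simps)
  also have "\<dots> \<le> 2 * (2 * A\<^sup>2 * E\<^sup>2 * w) + 2 * (8/3 * w)"
    using N2_sq D_sq by (intro add_mono mult_left_mono) auto
  also have "\<dots> = (4 * A\<^sup>2 * E\<^sup>2 + 16/3) * w"
    by (simp add: algebra_simps)
  also have "E\<^sup>2 = exp (4 * integral {0..T} g2)"
    by (simp add: E_def power2_eq_square exp_add[symmetric])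
  finally show ?thesis
    by (simp add: A_def w_def)
qed

lemma VII0_N3_growth:
  assumes "0 \<le> T"
  shows "2 * ln (N3 0) - ln (1 + Sp 0) + ln (1 + 4 * (1 + Sp 0) * T)
    \<le> 2 * ln (N3 T) - ln (1 + Sp T) + 4 * integral {0..T} g2"
proof -
  define w where "w t = 1 + Sp t" for t
  have w_pos: "0 < w t" for t
    using VII0_Sp_gt_minus_1[of t] by (simp add: w_def)
  define \<Phi> where "\<Phi> t = 2 * ln \<bar>N3 t\<bar> - ln (w t) - ln (1 + 4 * w 0 * t)" for t
  have "\<Phi> 0 \<le> \<Phi> T + 4 * integral {0..T} g2"
  proof (rule DERIV_plus_integral_from_0_nondecreasing[OF continuous_on_g2 assms])
    show "(\<Phi> has_real_derivative 2 * (2 * g3 t - (2 - WH_q (Sp t) (Sm t)))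
        - - (2 - WH_q (Sp t) (Sm t)) - 4 * w 0 / (1 + 4 * w 0 * t)) (at t)" if "0 \<le> t" for t
    proof -
      have lin: "((\<lambda>t. ln (1 + 4 * w 0 * t)) has_real_derivative 4 * w 0 / (1 + 4 * w 0 * t)) (at t)"
        using w_pos[of 0] that by (auto intro!: derivative_eq_intros simp: add_pos_nonneg)
      have ln_w: "((\<lambda>t. ln (w t)) has_real_derivative - (2 - WH_q (Sp t) (Sm t))) (at t)"
        unfolding w_def by (rule VII0_DERIV_ln_1_plus_Sp)
      show ?thesis
        unfolding \<Phi>_def[abs_def] using N3_pos[of t]
        by (intro DERIV_diff DERIV_cmult DERIV_ln_N3 lin ln_w) simp
    qed
    fix t :: real
    assume "0 < t"
    have "w 0 / (1 + 4 * w 0 * t) \<le> w t"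
      using VII0_1_plus_Sp_lower_bound[of t] \<open>0 < t\<close> by (simp add: w_def)
    then have "4 * w 0 / (1 + 4 * w 0 * t) \<le> 4 * w t"
      by simp
    moreover have "2 - WH_q (Sp t) (Sm t) \<le> 4 * w t"
      using two_minus_WH_q_le[of "Sp t" "Sm t"] by (simp add: w_def)
    moreover have "g2 t + g3 t = 2 + 2 * Sp t"
      by (simp add: g2_eq g3_eq)
    ultimately show "0 \<le> 2 * (2 * g3 t - (2 - WH_q (Sp t) (Sm t)))
        - - (2 - WH_q (Sp t) (Sm t)) - 4 * w 0 / (1 + 4 * w 0 * t) + 4 * g2 t"
      by (simp add: w_def)
  qed
  then show ?thesis
    using N3_pos[of 0] N3_pos[of T] by (simp add: \<Phi>_def w_def)
qed

lemma VII0_scale_factor2_tendsto_0: "(scale_factor (Sigma2 Sp Sm) \<longlongrightarrow> 0) at_top"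
proof -
  define I where "I T = integral {0..T} g2" for T
  define C where "C x = 4 * (N2 0 / (1 + Sp 0))\<^sup>2 * exp (4 * x) + 16/3" for x
  define c where "c = 2 * ln (N3 0) - ln (1 + Sp 0)"
  define F where "F x = ln (C x) + 4 * x - c" for x
  have "ln (1 + 4 * (1 + Sp 0) * T) \<le> F (I T)" if "0 \<le> T" for T
  proof -
    have "ln (1 + 4 * (1 + Sp 0) * T) \<le> 2 * ln (N3 T) - ln (1 + Sp T) + 4 * I T - c"
      using VII0_N3_growth[OF that] by (simp add: I_def c_def)
    also have "2 * ln (N3 T) - ln (1 + Sp T) = ln ((N3 T)\<^sup>2 / (1 + Sp T))"
      using N3_pos[of T] VII0_Sp_gt_minus_1[of T] by (simp add: ln_div ln_realpow)
    also have "\<dots> \<le> ln (C (I T))"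
      using VII0_N3_sq_le[OF that] N3_pos[of T] VII0_Sp_gt_minus_1[of T]
      by (intro ln_mono) (simp_all add: pos_divide_le_eq C_def I_def)
    finally show ?thesis
      by (simp add: F_def)
  qed
  then have "eventually (\<lambda>T. ln (1 + 4 * (1 + Sp 0) * T) \<le> F (I T)) at_top"
    by (rule eventually_at_top_linorderI)
  moreover have "mono F"
  proof (rule monoI)
    fix x y :: real
    assume "x \<le> y"
    with monoD[OF mono_ln_exp_affine[of "4 * (N2 0 / (1 + Sp 0))\<^sup>2" "16/3" 4] this]
    show "F x \<le> F y"
      by (simp add: F_def C_def)
  qed
  moreover have "filterlim (\<lambda>T. ln (1 + 4 * (1 + Sp 0) * T)) at_top at_top"
    using VII0_Sp_gt_minus_1[of 0]
    by (intro filterlim_compose[OF ln_at_top] filterlim_affine_at_top) simp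
  ultimately have "filterlim I at_top at_top"
    using filterlim_at_top_of_mono_bound by blast
  then show ?thesis
    unfolding I_def by (rule scale_factor_tendsto_0[of "Sigma2 Sp Sm", folded g2_def])
qed

lemma VII0_N2_plus_N3_growth:
  assumes Sp_ge: "\<And>t. 0 \<le> t \<Longrightarrow> 1/2 \<le> Sp t" and "0 \<le> T"
  shows "2 * sqrt (N2 0 * N3 0) * exp T \<le> N2 T + N3 T"
proof (rule power2_le_imp_le)
  have "ln \<bar>N2 0\<bar> + ln \<bar>N3 0\<bar> - 2 * 0 \<le> ln \<bar>N2 T\<bar> + ln \<bar>N3 T\<bar> - 2 * T"
  proof (rule DERIV_nonneg_imp_nondecreasing[OF \<open>0 \<le> T\<close>])
    fix t :: real
    assume "0 \<le> t"
    have "((\<lambda>t. ln \<bar>N2 t\<bar> + ln \<bar>N3 t\<bar> - 2 * t) has_real_derivative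
        (2 * g2 t - (2 - WH_q (Sp t) (Sm t))) + (2 * g3 t - (2 - WH_q (Sp t) (Sm t))) - 2 * 1) (at t)"
      using N2_pos[of t] N3_pos[of t]
      by (intro DERIV_add DERIV_diff DERIV_cmult DERIV_ln_N2 DERIV_ln_N3 DERIV_ident) auto
    moreover have "(2 * g2 t - (2 - WH_q (Sp t) (Sm t))) + (2 * g3 t - (2 - WH_q (Sp t) (Sm t))) - 2 * 1
        = 4 * Sp t - 2 + 4 * (Sp t)\<^sup>2 + 4 * (Sm t)\<^sup>2"
      by (simp add: g2_eq g3_eq WH_q_def algebra_simps)
    then have "0 \<le> (2 * g2 t - (2 - WH_q (Sp t) (Sm t))) + (2 * g3 t - (2 - WH_q (Sp t) (Sm t))) - 2 * 1"
      using Sp_ge[OF \<open>0 \<le> t\<close>] zero_le_power2[of "Sp t"] zero_le_power2[of "Sm t"] by linarith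
    ultimately show "\<exists>y. ((\<lambda>t. ln \<bar>N2 t\<bar> + ln \<bar>N3 t\<bar> - 2 * t) has_real_derivative y) (at t) \<and> 0 \<le> y"
      by blast
  qed
  then have "ln (N2 0 * N3 0 * exp (2 * T)) \<le> ln (N2 T * N3 T)"
    using N2_pos[of 0] N3_pos[of 0] N2_pos[of T] N3_pos[of T] by (simp add: ln_mult)
  then have "N2 0 * N3 0 * exp (2 * T) \<le> N2 T * N3 T"
    using N2_pos[of 0] N3_pos[of 0] N2_pos[of T] N3_pos[of T] by simp
  moreover have "4 * (N2 T * N3 T) \<le> (N2 T + N3 T)\<^sup>2"
    using zero_le_power2[of "N2 T - N3 T"] by (simp add: power2_eq_square algebra_simps)
  ultimately show "(2 * sqrt (N2 0 * N3 0) * exp T)\<^sup>2 \<le> (N2 T + N3 T)\<^sup>2"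
    using N2_pos[of 0] N3_pos[of 0]
    by (simp add: power_mult_distrib exp_double[symmetric] real_sqrt_pow2)
qed (use N2_pos[of T] N3_pos[of T] in simp)

lemma VII0_DERIV_rotation:
  "(rotation has_real_derivative
      2 * sqrt 3 * (Sm t)\<^sup>2 - 3 * sqrt 3 / 2 * (N2 t - N3 t)\<^sup>2
      - ((2 - WH_q (Sp t) (Sm t)) * (N2 t - N3 t) * Sm t / (N2 t + N3 t)
        + 2 * sqrt 3 * (Sm t)\<^sup>2 * (N2 t - N3 t)\<^sup>2 / (N2 t + N3 t)\<^sup>2)) (at t)"
proof -
  have S: "N2 t + N3 t \<noteq> 0"
    using N2_pos[of t] N3_pos[of t] by simp
  note raw = DERIV_divide[OF DERIV_mult[OF DERIV_diff[OF DERIV_N2 DERIV_N3] DERIV_Sm]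
      DERIV_add[OF DERIV_N2 DERIV_N3] S]
  show ?thesis
    unfolding rotation_def[abs_def]
    by (rule DERIV_cong[OF raw]) (insert S, simp add: WH_Sminus_def N1_zero divide_simps, algebra)
qed

lemma VII0_rotation_le_1: "rotation t \<le> 1"
proof -
  have "\<bar>(N2 t - N3 t) * Sm t\<bar> \<le> (N2 t + N3 t) * 1"
    unfolding abs_mult using N2_pos[of t] N3_pos[of t] VII0_constraint_bounds(1)[of t]
    by (intro mult_mono) auto
  then show ?thesis
    using N2_pos[of t] N3_pos[of t] by (simp add: rotation_def divide_le_eq)
qed

lemma VII0_rotation_error_le:
  assumes Sp_ge: "\<And>t. 0 \<le> t \<Longrightarrow> 1/2 \<le> Sp t" and "0 \<le> t"
  shows "(2 - WH_q (Sp t) (Sm t)) * (N2 t - N3 t) * Sm t / (N2 t + N3 t)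
      + 2 * sqrt 3 * (Sm t)\<^sup>2 * (N2 t - N3 t)\<^sup>2 / (N2 t + N3 t)\<^sup>2
    \<le> 6 / sqrt (N2 0 * N3 0) * exp (- t)"
proof -
  have "(2 - WH_q (Sp t) (Sm t)) * (N2 t - N3 t) * Sm t / (N2 t + N3 t)
      + 2 * sqrt 3 * (Sm t)\<^sup>2 * (N2 t - N3 t)\<^sup>2 / (N2 t + N3 t)\<^sup>2 \<le> 12 / (N2 t + N3 t)"
  proof (rule rotation_error_bound)
    show "0 < N2 t + N3 t" "\<bar>N2 t - N3 t\<bar> \<le> N2 t + N3 t"
      using N2_pos[of t] N3_pos[of t] by auto
    show "\<bar>N2 t - N3 t\<bar> \<le> 2" "\<bar>Sm t\<bar> \<le> 1"
      by (rule VII0_constraint_bounds)+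
    show "0 \<le> 2 - WH_q (Sp t) (Sm t)" "2 - WH_q (Sp t) (Sm t) \<le> 2"
      using VII0_two_minus_q[of t] VII0_constraint[of t] zero_le_power2[of "Sp t"]
        zero_le_power2[of "Sm t"] zero_le_power2[of "N2 t - N3 t"] by linarith+
  qed
  also have "\<dots> \<le> 12 / (2 * sqrt (N2 0 * N3 0) * exp t)"
    using VII0_N2_plus_N3_growth[OF Sp_ge \<open>0 \<le> t\<close>] N2_pos[of 0] N3_pos[of 0] N2_pos[of t] N3_pos[of t]
    by (intro divide_left_mono) (auto intro!: mult_pos_pos)
  also have "\<dots> = 6 / sqrt (N2 0 * N3 0) * exp (- t)"
    by (simp add: exp_minus field_simps)
  finally show ?thesis .
qed

lemma VII0_rotation_increasing:
  assumes Sp_ge: "\<And>t. 0 \<le> t \<Longrightarrow> 1/2 \<le> Sp t" and "0 \<le> T"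
  defines "c \<equiv> 1 - (Sp 0)\<^sup>2" and "K \<equiv> 6 / sqrt (N2 0 * N3 0)"
  shows "rotation 0 - 2 * sqrt 3 * ln (1 + Sp 0) - K
    \<le> rotation T - 2 * sqrt 3 * ln (1 + Sp T) - 2 * sqrt 3 * c * T - K * exp (- T)"
proof -
  (* Up to O(1 / (N2 + N3)), rotation' = 2 sqrt 3 Sm^2 - 3 sqrt 3 / 2 (N2 - N3)^2, and the
     correction - 2 sqrt 3 ln (1 + Sp) turns this into 2 sqrt 3 (1 - Sp^2) >= 2 sqrt 3 c. *)
  define \<Phi> where "\<Phi> t = rotation t - 2 * sqrt 3 * ln (1 + Sp t) - 2 * sqrt 3 * c * t - K * exp (- t)"
    for t
  have "\<Phi> 0 \<le> \<Phi> T"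
  proof (rule DERIV_nonneg_imp_nondecreasing[OF \<open>0 \<le> T\<close>])
    fix t :: real
    assume "0 \<le> t"
    have "((\<lambda>t. exp (- t)) has_real_derivative - exp (- t)) (at t)"
      by (auto intro!: derivative_eq_intros)
    then have deriv: "(\<Phi> has_real_derivative
        (2 * sqrt 3 * (Sm t)\<^sup>2 - 3 * sqrt 3 / 2 * (N2 t - N3 t)\<^sup>2
          - ((2 - WH_q (Sp t) (Sm t)) * (N2 t - N3 t) * Sm t / (N2 t + N3 t)
            + 2 * sqrt 3 * (Sm t)\<^sup>2 * (N2 t - N3 t)\<^sup>2 / (N2 t + N3 t)\<^sup>2))
        - 2 * sqrt 3 * (- (2 - WH_q (Sp t) (Sm t))) - 2 * sqrt 3 * c * 1 - K * (- exp (- t))) (at t)"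
      (is "(\<Phi> has_real_derivative ?\<Phi>') _")
      unfolding \<Phi>_def[abs_def]
      by (intro DERIV_diff DERIV_cmult VII0_DERIV_rotation VII0_DERIV_ln_1_plus_Sp DERIV_ident)
    have "(Sp t)\<^sup>2 \<le> (Sp 0)\<^sup>2"
      using Sp_ge[OF \<open>0 \<le> t\<close>] VII0_Sp_antimono[OF \<open>0 \<le> t\<close>] by (intro power_mono) auto
    then have "2 * sqrt 3 * c \<le> 2 * sqrt 3 * ((Sm t)\<^sup>2 + 3/4 * (N2 t - N3 t)\<^sup>2)"
      using VII0_constraint[of t] by (simp add: c_def)
    moreover have "2 * sqrt 3 * (Sm t)\<^sup>2 - 3 * sqrt 3 / 2 * (N2 t - N3 t)\<^sup>2
        + 2 * sqrt 3 * (2 - WH_q (Sp t) (Sm t)) = 2 * sqrt 3 * ((Sm t)\<^sup>2 + 3/4 * (N2 t - N3 t)\<^sup>2)"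
      by (simp add: VII0_two_minus_q algebra_simps)
    ultimately have "0 \<le> ?\<Phi>'"
      using VII0_rotation_error_le[OF Sp_ge \<open>0 \<le> t\<close>, folded K_def] by linarith
    with deriv show "\<exists>y. (\<Phi> has_real_derivative y) (at t) \<and> 0 \<le> y"
      by blast
  qed
  then show ?thesis
    by (simp add: \<Phi>_def)
qed

lemma VII0_Sp_eventually_below_half: "\<exists>\<tau>\<ge>0. Sp \<tau> < 1/2"
proof (rule ccontr)
  assume "\<not> (\<exists>\<tau>\<ge>0. Sp \<tau> < 1/2)"
  then have Sp_ge: "1/2 \<le> Sp t" if "0 \<le> t" for t
    using that by (simp add: not_less)
  define c where "c = 1 - (Sp 0)\<^sup>2"
  define K where "K = 6 / sqrt (N2 0 * N3 0)"
  have "0 < c"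
    using VII0_abs_Sp_less_1[of 0] by (simp add: c_def abs_square_less_1)
  define T where "T = max 0 ((2 - rotation 0 + 2 * sqrt 3 * ln (1 + Sp 0) + K) / (2 * sqrt 3 * c))"
  have "0 \<le> T"
    by (simp add: T_def)
  have "(2 - rotation 0 + 2 * sqrt 3 * ln (1 + Sp 0) + K) / (2 * sqrt 3 * c) \<le> T"
    by (simp add: T_def)
  then have "2 - rotation 0 + 2 * sqrt 3 * ln (1 + Sp 0) + K \<le> 2 * sqrt 3 * c * T"
    using \<open>0 < c\<close> by (simp add: pos_divide_le_eq mult_ac)
  moreover have "0 \<le> sqrt 3 * ln (1 + Sp T)"
    using Sp_ge[OF \<open>0 \<le> T\<close>] by simp
  moreover have "0 \<le> K * exp (- T)"
    using N2_pos[of 0] N3_pos[of 0] by (simp add: K_def)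
  ultimately show False
    using VII0_rotation_increasing[OF Sp_ge \<open>0 \<le> T\<close>, folded c_def K_def] VII0_rotation_le_1[of T]
    by linarith
qed

lemma VII0_scale_factor1_tendsto_0: "(scale_factor (Sigma1 Sp Sm) \<longlongrightarrow> 0) at_top"
proof -
  obtain \<tau> where \<tau>: "0 \<le> \<tau>" "Sp \<tau> < 1/2"
    using VII0_Sp_eventually_below_half by blast
  define \<delta> where "\<delta> = 1 - 2 * Sp \<tau>"
  have "0 < \<delta>"
    using \<tau> by (simp add: \<delta>_def)
  have "- \<delta> * \<tau> + 1 * integral {0..\<tau>} g1 \<le> - \<delta> * T + 1 * integral {0..T} g1" if "\<tau> \<le> T" for T
  proof (rule DERIV_plus_integral_nondecreasing[OF continuous_on_g1 \<tau>(1) that])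
    show "((\<lambda>t. - \<delta> * t) has_real_derivative - \<delta> * 1) (at t)" for t
      by (intro DERIV_cmult DERIV_ident)
    show "0 \<le> - \<delta> * 1 + 1 * g1 t" if "\<tau> < t" for t
      using VII0_Sp_antimono[of \<tau> t] that by (simp add: g1_eq \<delta>_def)
  qed
  then have "eventually (\<lambda>T. (integral {0..\<tau>} g1 - \<delta> * \<tau>) + \<delta> * T \<le> integral {0..T} g1) at_top"
    by (intro eventually_at_top_linorderI[of \<tau>]) (simp add: algebra_simps)
  with filterlim_affine_at_top[OF \<open>0 < \<delta>\<close>] have "filterlim (\<lambda>T. integral {0..T} g1) at_top at_top"
    by (rule filterlim_at_top_mono)
  then show ?thesis
    by (rule scale_factor_tendsto_0[of "Sigma1 Sp Sm", folded g1_def])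
qed

end

end

theorem mainTheorem19:
  fixes N1 N2 N3 Sp Sm :: "real \<Rightarrow> real"
  assumes sol: "WH_solution N1 N2 N3 Sp Sm"
  shows
   "((\<forall>t. N1 t = 0) \<and> (\<forall>t. N2 t > 0) \<and> (\<forall>t. N3 t > 0)
       \<and> (\<forall>t. \<not> (N2 t = N3 t \<and> Sm t = 0))
     \<longrightarrow> ((scale_factor (Sigma1 Sp Sm) \<longlongrightarrow> 0) at_top
          \<and> (scale_factor (Sigma2 Sp Sm) \<longlongrightarrow> 0) at_top
          \<and> (scale_factor (Sigma3 Sp Sm) \<longlongrightarrow> 0) at_top))
  \<and> ((\<forall>t. N1 t < 0) \<and> (\<forall>t. N2 t > 0) \<and> (\<forall>t. N3 t > 0)
     \<longrightarrow> ((scale_factor (Sigma2 Sp Sm) \<longlongrightarrow> 0) at_top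
          \<and> (scale_factor (Sigma3 Sp Sm) \<longlongrightarrow> 0) at_top
          \<and> (\<exists>C. \<forall>t\<ge>0. \<bar>scale_factor (Sigma1 Sp Sm) t\<bar> \<le> C)))"
proof -
  interpret WH_orbit N1 N2 N3 Sp Sm
    by (rule WH_orbit.intro[OF sol])
  interpret swapped: WH_orbit N1 N3 N2 Sp "\<lambda>t. - Sm t"
    by (rule WH_orbit.intro[OF WH_solution_swap])
  have VII0: "(scale_factor (Sigma1 Sp Sm) \<longlongrightarrow> 0) at_top
      \<and> (scale_factor (Sigma2 Sp Sm) \<longlongrightarrow> 0) at_top \<and> (scale_factor (Sigma3 Sp Sm) \<longlongrightarrow> 0) at_top"
    if "\<And>t. N1 t = 0" "\<And>t. 0 < N2 t" "\<And>t. 0 < N3 t" "\<And>t. \<not> (N2 t = N3 t \<and> Sm t = 0)"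
    using VII0_scale_factor1_tendsto_0[OF that] VII0_scale_factor2_tendsto_0[OF that]
      swapped.VII0_scale_factor2_tendsto_0[OF that(1,3,2)] that(4)
    by (auto simp: Sigma3_eq_Sigma2_swap)
  have VIII: "(scale_factor (Sigma2 Sp Sm) \<longlongrightarrow> 0) at_top \<and> (scale_factor (Sigma3 Sp Sm) \<longlongrightarrow> 0) at_top
      \<and> (\<exists>C. \<forall>t\<ge>0. \<bar>scale_factor (Sigma1 Sp Sm) t\<bar> \<le> C)"
    if "\<And>t. N1 t < 0" "\<And>t. 0 < N2 t" "\<And>t. 0 < N3 t"
    using VIII_scale_factor2_tendsto_0[OF that] swapped.VIII_scale_factor2_tendsto_0[OF that(1,3,2)]
      VIII_scale_factor1_bounded[OF that]
    by (simp add: Sigma3_eq_Sigma2_swap)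
  show ?thesis
    using VII0 VIII by blast
qed

end
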